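(* Let $F/\mathbb{Q}$ be a totally real number field of degree $n$ with ring of integers $R$, and let $H=\left(\frac{a,b}{F}\right)$, with $a,b\in R\setminus\{0\}$, be a quaternion $F$-algebra which is a division algebra and satisfies $H\otimes_{\mathbb{Q}}\mathbb{R}\cong\mathrm{M}(2,\mathbb{R})\times\mathbb{H}^{n-1}$. Then any Fuchsian code associated to the natural order $R[1,I,J,K]$ has code rate at least $3n$.
   Context: $H=\left(\frac{a,b}{F}\right)$ is the $F$-algebra with basis $1,I,J,K$ and relations $I^2=a$, $J^2=b$, $K=IJ=-JI$, with reduced norm $\mathrm{N}(x+yI+zJ+tK)=x^2-ay^2-bz^2+abt^2$; $\mathbb{H}$ denotes Hamilton's quaternions. The natural order is $\mathcal{O}=R+RI+RJ+RK$ (an $R$-order since $a,b\in R$). Viewing $F\subset\mathbb{R}$ via an embedding with $a>0$, let $\phi(x+yI+zJ+tK)=\begin{pmatrix} x+y\sqrt a & z+t\sqrt a\\ b(z-t\sqrt a) & x-y\sqrt a\end{pmatrix}$ and $\Gamma=\phi(\mathcal{O}^*_+)$, where $\mathcal{O}^*_+$ is the group of units of $\mathcal{O}$ with positive reduced norm; $\Gamma$ acts on the upper half-plane $\mathcal{H}$ by Möbius transformations. A fundamental domain for $\Gamma$ is a closed hyperbolic polygon $\mathcal{F}\subset\mathcal{H}$ such that no two distinct interior points are $\Gamma$-equivalent (and only $\pm\mathrm{Id}$ fixes an interior point) and every point of $\mathcal{H}$ is $\Gamma$-equivalent to a point of $\mathcal{F}$. A Fuchsian code associated to $\Gamma$ is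 $\mathcal{C}=\{\pm g(\tau): g\in S\}\subset\mathbb{C}$ for a fundamental domain $\mathcal{F}$, a finite set $S\subset\Gamma$ and an interior point $\tau$ of $\mathcal{F}$. Code rate: fix a $\mathbb{Z}$-basis $\theta_1=1,\dots,\theta_n$ of $R$, write $x=\sum_k x_k\theta_k$, and similarly $y,z,t$ with indeterminate integer coordinates $y_k,z_k,t_k$; then $x^2-ay^2-bz^2+abt^2=\sum_{k=1}^n g_k\theta_k$ with $g_k\in\mathbb{Z}[x_1,\dots,t_n]$. The algebraic set $A(\Gamma)\subset\mathbb{C}^{4n}$ is defined by $g_1=1$, $g_k=0$ ($2\le k\le n$), and the code rate of a Fuchsian code attached to $\Gamma$ is $\dim A(\Gamma)$. *)

theory Defs
  imports "HOL-Analysis.Analysis" "HOL-Algebra.Ideal" "HOL-Computational_Algebra.Polynomial"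
begin

text \<open>A subfield F of the reals (every number field embeds in the reals when it is
totally real; the concrete embedding plays no role for the code rate).\<close>
definition real_subfield :: "real set \<Rightarrow> bool" where
  "real_subfield F \<longleftrightarrow> 0 \<in> F \<and> 1 \<in> F \<and>
     (\<forall>x\<in>F. \<forall>y\<in>F. x + y \<in> F \<and> x - y \<in> F \<and> x * y \<in> F) \<and>
     (\<forall>x\<in>F. x \<noteq> 0 \<longrightarrow> inverse x \<in> F)"

definition number_field_deg :: "real set \<Rightarrow> nat \<Rightarrow> bool" where
  "number_field_deg F n \<longleftrightarrow> real_subfield F \<and>
     (\<exists>e :: nat \<Rightarrow> real. (\<forall>i<n. e i \<in> F) \<and>
        (\<forall>x\<in>F. \<exists>!q :: nat \<Rightarrow> rat. (\<forall>i\<ge>n. q i = 0) \<and> x = (\<Sum>i<n. of_rat (q i) * e i)))"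

definition field_emb :: "real set \<Rightarrow> (real \<Rightarrow> complex) \<Rightarrow> bool" where
  "field_emb F \<sigma> \<longleftrightarrow> \<sigma> 1 = 1 \<and>
     (\<forall>x\<in>F. \<forall>y\<in>F. \<sigma> (x + y) = \<sigma> x + \<sigma> y \<and> \<sigma> (x * y) = \<sigma> x * \<sigma> y) \<and>
     (\<forall>x. x \<notin> F \<longrightarrow> \<sigma> x = 0)"

definition totally_real :: "real set \<Rightarrow> bool" where
  "totally_real F \<longleftrightarrow> (\<forall>\<sigma>. field_emb F \<sigma> \<longrightarrow> (\<forall>x\<in>F. \<sigma> x \<in> \<real>))"

definition ring_of_integers :: "real set \<Rightarrow> real set" where
  "ring_of_integers F = {x \<in> F. \<exists>p :: int poly. lead_coeff p = 1 \<and> poly (map_poly of_int p) x = 0}"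

definition integral_basis :: "real set \<Rightarrow> nat \<Rightarrow> (nat \<Rightarrow> real) \<Rightarrow> bool" where
  "integral_basis F n \<theta> \<longleftrightarrow> (\<forall>k<n. \<theta> k \<in> ring_of_integers F) \<and>
     (\<forall>x\<in>ring_of_integers F. \<exists>!c :: nat \<Rightarrow> int. (\<forall>k\<ge>n. c k = 0) \<and>
        x = (\<Sum>k<n. of_int (c k) * \<theta> k))"

definition zcoord :: "nat \<Rightarrow> (nat \<Rightarrow> real) \<Rightarrow> real \<Rightarrow> nat \<Rightarrow> int" where
  "zcoord n \<theta> x = (THE c. (\<forall>k\<ge>n. c k = 0) \<and> x = (\<Sum>k<n. of_int (c k) * \<theta> k))"

section \<open>Quaternion algebras (a,b / K), elements as 4-tuples (x,y,z,t) = x + yI + zJ + tK\<close>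

type_synonym 'a quat4 = "'a \<times> 'a \<times> 'a \<times> 'a"

definition qmult :: "'a::comm_ring_1 \<Rightarrow> 'a \<Rightarrow> 'a quat4 \<Rightarrow> 'a quat4 \<Rightarrow> 'a quat4" where
  "qmult a b p q = (case p of (x1, y1, z1, t1) \<Rightarrow> case q of (x2, y2, z2, t2) \<Rightarrow>
     (x1*x2 + a*y1*y2 + b*z1*z2 - a*b*t1*t2,
      x1*y2 + y1*x2 - b*z1*t2 + b*t1*z2,
      x1*z2 + z1*x2 + a*y1*t2 - a*t1*y2,
      x1*t2 + t1*x2 + y1*z2 - z1*y2))"

definition qadd :: "'a::comm_ring_1 quat4 \<Rightarrow> 'a quat4 \<Rightarrow> 'a quat4" where
  "qadd p q = (case p of (x1, y1, z1, t1) \<Rightarrow> case q of (x2, y2, z2, t2) \<Rightarrow>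
     (x1 + x2, y1 + y2, z1 + z2, t1 + t2))"

definition qscale :: "'a::comm_ring_1 \<Rightarrow> 'a quat4 \<Rightarrow> 'a quat4" where
  "qscale c p = (case p of (x, y, z, t) \<Rightarrow> (c*x, c*y, c*z, c*t))"

definition quat_division_algebra :: "real set \<Rightarrow> real \<Rightarrow> real \<Rightarrow> bool" where
  "quat_division_algebra F a b \<longleftrightarrow>
     (\<forall>x\<in>F. \<forall>y\<in>F. \<forall>z\<in>F. \<forall>t\<in>F. (x, y, z, t) \<noteq> (0, 0, 0, 0) \<longrightarrow>
        (\<exists>x'\<in>F. \<exists>y'\<in>F. \<exists>z'\<in>F. \<exists>t'\<in>F.
           qmult a b (x, y, z, t) (x', y', z', t') = (1, 0, 0, 0) \<and>
           qmult a b (x', y', z', t') (x, y, z, t) = (1, 0, 0, 0)))"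

definition real_quat_iso_hamilton :: "real \<Rightarrow> real \<Rightarrow> bool" where
  "real_quat_iso_hamilton a b \<longleftrightarrow> (\<exists>\<psi> :: real quat4 \<Rightarrow> real quat4. bij \<psi> \<and>
     (\<forall>p q. \<psi> (qadd p q) = qadd (\<psi> p) (\<psi> q)) \<and>
     (\<forall>c p. \<psi> (qscale c p) = qscale c (\<psi> p)) \<and>
     (\<forall>p q. \<psi> (qmult a b p q) = qmult (-1) (-1) (\<psi> p) (\<psi> q)))"

definition real_quat_iso_M2 :: "real \<Rightarrow> real \<Rightarrow> bool" where
  "real_quat_iso_M2 a b \<longleftrightarrow> (\<exists>\<psi> :: real quat4 \<Rightarrow> real^2^2. bij \<psi> \<and>
     (\<forall>p q. \<psi> (qadd p q) = \<psi> p + \<psi> q) \<and>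
     (\<forall>c p. \<psi> (qscale c p) = c *\<^sub>R \<psi> p) \<and>
     (\<forall>p q. \<psi> (qmult a b p q) = \<psi> p ** \<psi> q))"

text \<open>Coefficient of theta k in c * (sum_{i,j} w_i w_j theta_i theta_j), where c is in R,
  computed formally via the structure constants of R w.r.t. the basis theta.\<close>
definition quad_coord :: "nat \<Rightarrow> (nat \<Rightarrow> real) \<Rightarrow> real \<Rightarrow> (nat \<Rightarrow> complex) \<Rightarrow> nat \<Rightarrow> complex" where
  "quad_coord n \<theta> c w k =
     (\<Sum>l<n. \<Sum>p<n. \<Sum>i<n. \<Sum>j<n.
        of_int (zcoord n \<theta> c l * zcoord n \<theta> (\<theta> i * \<theta> j) p * zcoord n \<theta> (\<theta> l * \<theta> p) k)
        * w i * w j)"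

text \<open>The polynomial g_k (k = 0..n-1, with theta 0 = 1) evaluated at a point v of C^(4n),
  whose coordinates are x_i = v i, y_i = v (n+i), z_i = v (2n+i), t_i = v (3n+i).\<close>
definition gpoly :: "nat \<Rightarrow> (nat \<Rightarrow> real) \<Rightarrow> real \<Rightarrow> real \<Rightarrow> nat \<Rightarrow> (nat \<Rightarrow> complex) \<Rightarrow> complex" where
  "gpoly n \<theta> a b k v =
     quad_coord n \<theta> 1 (\<lambda>i. v i) k
     - quad_coord n \<theta> a (\<lambda>i. v (n + i)) k
     - quad_coord n \<theta> b (\<lambda>i. v (2*n + i)) k
     + quad_coord n \<theta> (a * b) (\<lambda>i. v (3*n + i)) k"

definition code_algset :: "nat \<Rightarrow> (nat \<Rightarrow> real) \<Rightarrow> real \<Rightarrow> real \<Rightarrow> (nat \<Rightarrow> complex) set" where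
  "code_algset n \<theta> a b = {v. (\<forall>i\<ge>4*n. v i = 0) \<and> gpoly n \<theta> a b 0 v = 1 \<and>
       (\<forall>k. 1 \<le> k \<and> k < n \<longrightarrow> gpoly n \<theta> a b k v = 0)}"

inductive_set polyfun :: "nat \<Rightarrow> ((nat \<Rightarrow> complex) \<Rightarrow> complex) set" for N where
  pf_const: "(\<lambda>_. c) \<in> polyfun N"
| pf_var: "i < N \<Longrightarrow> (\<lambda>v. v i) \<in> polyfun N"
| pf_add: "f \<in> polyfun N \<Longrightarrow> g \<in> polyfun N \<Longrightarrow> (\<lambda>v. f v + g v) \<in> polyfun N"
| pf_mult: "f \<in> polyfun N \<Longrightarrow> g \<in> polyfun N \<Longrightarrow> (\<lambda>v. f v * g v) \<in> polyfun N"

text \<open>Coordinate ring C[X_1..X_N]/I(A) of an algebraic set A, realised as the ring of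
  polynomial functions restricted to A.\<close>
definition coord_ring :: "nat \<Rightarrow> (nat \<Rightarrow> complex) set \<Rightarrow> ((nat \<Rightarrow> complex) \<Rightarrow> complex) ring" where
  "coord_ring N A = \<lparr>carrier = (\<lambda>f. restrict f A) ` polyfun N,
     monoid.mult = (\<lambda>f g. restrict (\<lambda>v. f v * g v) A),
     one = restrict (\<lambda>_. 1) A,
     zero = restrict (\<lambda>_. 0) A,
     add = (\<lambda>f g. restrict (\<lambda>v. f v + g v) A)\<rparr>"

text \<open>Dimension of an algebraic set = Krull dimension of its coordinate ring
  (supremum of lengths d of strict chains P_0 < ... < P_d of prime ideals).\<close>
definition alg_set_dim :: "nat \<Rightarrow> (nat \<Rightarrow> complex) set \<Rightarrow> enat" where
  "alg_set_dim N A = Sup {enat d | d. \<exists>P :: nat \<Rightarrow> ((nat \<Rightarrow> complex) \<Rightarrow> complex) set.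
       (\<forall>i\<le>d. primeideal (P i) (coord_ring N A)) \<and> (\<forall>i<d. P i \<subset> P (Suc i))}"

end

theory Submission
  imports Defs "Jordan_Normal_Form.Char_Poly" "HOL-Complex_Analysis.Complex_Analysis"
begin

(* Over the complex numbers the ring R becomes the commutative algebra R_C = R (x) C of dimension n,
   and A(Gamma) is the norm-one variety x^2 - a y^2 - b z^2 + ab t^2 = 1 of the quaternion algebra
   over R_C, written in coordinates. The Cayley-type map
     (Y, Z, T) |-> ((1 + Q) r, 2 r Y, 2 r Z, 2 r T),   Q = a Y^2 + b Z^2 - ab T^2,  r = (1 - Q)^-1,
   is a rational map C^(3n) -> A(Gamma), defined where the norm of 1 - Q is nonzero, and it is
   injective there because Y = y (x + 1)^-1. Pulling back along it, the functions vanishing on the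
   images of the coordinate subspaces C^0 < C^1 < ... < C^(3n) form a strictly increasing chain of
   3n + 1 prime ideals of the coordinate ring, so dim A(Gamma) >= 3n. Only the arithmetic of R
   enters. *)

section \<open>Algebraic integers are closed under multiplication\<close>

lemma algebraic_int_eigenvalue_of_int_mat:
  fixes M :: "int mat" and w :: "'a :: field_char_0 vec"
  assumes M: "M \<in> carrier_mat N N" and w: "w \<in> carrier_vec N" "w \<noteq> 0\<^sub>v N"
    and ev: "map_mat of_int M *\<^sub>v w = \<gamma> \<cdot>\<^sub>v w"
  shows "algebraic_int \<gamma>"
proof -
  let ?M = "map_mat (of_int :: int \<Rightarrow> 'a) M"
  have "eigenvalue ?M \<gamma>" unfolding eigenvalue_def eigenvector_def using M w ev by auto
  then have "poly (char_poly ?M) \<gamma> = 0" using eigenvalue_root_char_poly[of ?M N] M by simp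
  moreover have "char_poly ?M = map_poly of_int (char_poly M)" by (rule of_int_hom.char_poly_hom[OF M])
  moreover have "lead_coeff (char_poly M) = 1" using degree_monic_char_poly[OF M] by simp
  ultimately show ?thesis unfolding algebraic_int_altdef_ipoly by metis
qed

lemma degree_pos_of_monic_root:
  fixes x :: "'a :: field_char_0" and p :: "int poly"
  assumes "lead_coeff p = 1" and "poly (map_poly of_int p) x = 0"
  shows "degree p > 0"
  using assms by (cases "degree p") (auto simp: poly_altdef of_int_hom.degree_map_poly_hom)

lemma monic_root_power_int_combination:
  fixes x :: "'a :: field_char_0" and p :: "int poly"
  assumes lc: "lead_coeff p = 1" and root: "poly (map_poly of_int p) x = 0"
  shows "\<exists>c :: nat \<Rightarrow> int. x ^ k = (\<Sum>i<degree p. of_int (c i) * x ^ i)"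
proof -
  obtain d where d: "degree p = Suc d"
    using degree_pos_of_monic_root[OF lc root] gr0_implies_Suc by blast
  have "0 = (\<Sum>i\<le>Suc d. of_int (coeff p i) * x ^ i)"
    using root by (simp add: poly_altdef d of_int_hom.degree_map_poly_hom)
  also have "\<dots> = (\<Sum>i<Suc d. of_int (coeff p i) * x ^ i) + x ^ Suc d"
    using lc d by (simp add: lessThan_Suc_atMost[symmetric])
  finally have top: "x ^ Suc d = - (\<Sum>i<Suc d. of_int (coeff p i) * x ^ i)"
    by (metis add.commute eq_neg_iff_add_eq_0)
  show ?thesis
    unfolding d
  proof (induction k)
    case 0
    show ?case
      by (rule exI[of _ "\<lambda>i. if i = 0 then 1 else 0"]) (subst sum.lessThan_Suc_shift, simp)
  next
    case (Suc k)
    then obtain c where c: "x ^ k = (\<Sum>i<Suc d. of_int (c i) * x ^ i)" by blast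
    define c' where "c' i = (if i = 0 then 0 else c (i - 1)) - c d * coeff p i" for i
    have "x ^ Suc k = (\<Sum>i<Suc d. of_int (c i) * x ^ Suc i)"
      using c by (simp add: sum_distrib_left algebra_simps)
    also have "\<dots> = (\<Sum>i<Suc d. of_int (if i = 0 then 0 else c (i - 1)) * x ^ i)
                     + of_int (c d) * x ^ Suc d"
      by (subst (2) sum.lessThan_Suc_shift) simp
    also have "\<dots> = (\<Sum>i<Suc d. of_int (c' i) * x ^ i)"
      unfolding top c'_def
      by (simp add: left_diff_distrib right_diff_distrib sum_subtractf sum_distrib_left mult.assoc)
    finally show ?case by blast
  qed
qed

lemma sum_lessThan_mult_div_mod:
  fixes g :: "nat \<Rightarrow> nat \<Rightarrow> 'a :: comm_monoid_add"
  assumes "e > 0"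
  shows "(\<Sum>l<d * e. g (l div e) (l mod e)) = (\<Sum>i<d. \<Sum>j<e. g i j)"
proof (induction d)
  case (Suc d)
  have split: "(\<Sum>l<a + b. f l) = (\<Sum>l<a. f l) + (\<Sum>l<b. f (a + l))" for a b and f :: "nat \<Rightarrow> 'a"
    by (induction b) (auto simp: add.assoc)
  have "(\<Sum>l<Suc d * e. g (l div e) (l mod e))
      = (\<Sum>l<d * e. g (l div e) (l mod e)) + (\<Sum>j<e. g ((d * e + j) div e) ((d * e + j) mod e))"
    by (simp only: mult_Suc add.commute[of e] split)
  also have "(\<Sum>j<e. g ((d * e + j) div e) ((d * e + j) mod e)) = (\<Sum>j<e. g d j)"
    using assms by (intro sum.cong) auto
  finally show ?case using Suc by simp
qed simp

text \<open>The product x y is an eigenvalue of the integer matrix of multiplication by x y on the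
  span of the monomials x^i y^j, i < deg p, j < deg q.\<close>

lemma algebraic_int_times:
  fixes x y :: "'a :: field_char_0"
  assumes "algebraic_int x" "algebraic_int y"
  shows "algebraic_int (x * y)"
proof -
  obtain p where p: "lead_coeff p = 1" "poly (map_poly of_int p) x = 0"
    using assms(1) unfolding algebraic_int_altdef_ipoly by blast
  obtain q where q: "lead_coeff q = 1" "poly (map_poly of_int q) y = 0"
    using assms(2) unfolding algebraic_int_altdef_ipoly by blast
  define d where "d = degree p"
  define e where "e = degree q"
  obtain cx where cx: "\<And>k. x ^ k = (\<Sum>i<d. of_int (cx k i) * x ^ i)"
    using monic_root_power_int_combination[OF p] unfolding d_def by metis
  obtain cy where cy: "\<And>k. y ^ k = (\<Sum>i<e. of_int (cy k i) * y ^ i)"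
    using monic_root_power_int_combination[OF q] unfolding e_def by metis
  have "d > 0" "e > 0"
    using degree_pos_of_monic_root[OF p] degree_pos_of_monic_root[OF q] unfolding d_def e_def .
  define N where "N = d * e"
  define w where "w = vec N (\<lambda>k. x ^ (k div e) * y ^ (k mod e))"
  define M where "M = mat N N (\<lambda>(k, l). cx (k div e + 1) (l div e) * cy (k mod e + 1) (l mod e))"
  have M: "M \<in> carrier_mat N N" and w: "w \<in> carrier_vec N" unfolding M_def w_def by simp_all
  have "N > 0" unfolding N_def using \<open>d > 0\<close> \<open>e > 0\<close> by simp
  then have "w $ 0 = 1" unfolding w_def by simp
  then have w0: "w \<noteq> 0\<^sub>v N" using \<open>N > 0\<close> by (metis index_zero_vec(1) zero_neq_one)
  have "map_mat of_int M *\<^sub>v w = (x * y) \<cdot>\<^sub>v w"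
  proof (rule eq_vecI)
    fix k assume "k < dim_vec ((x * y) \<cdot>\<^sub>v w)"
    then have k: "k < N" using w by simp
    have "(map_mat of_int M *\<^sub>v w) $ k = (\<Sum>l<d * e. (of_int (cx (k div e + 1) (l div e)) * x ^ (l div e))
        * (of_int (cy (k mod e + 1) (l mod e)) * y ^ (l mod e)))"
      using k M w unfolding N_def
      by (simp add: scalar_prod_def atLeast0LessThan) (auto simp: M_def w_def N_def intro!: sum.cong)
    also have "\<dots> = (\<Sum>i<d. \<Sum>j<e. (of_int (cx (k div e + 1) i) * x ^ i) * (of_int (cy (k mod e + 1) j) * y ^ j))"
      by (rule sum_lessThan_mult_div_mod[OF \<open>e > 0\<close>,
            where g = "\<lambda>i j. (of_int (cx (k div e + 1) i) * x ^ i) * (of_int (cy (k mod e + 1) j) * y ^ j)"])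
    also have "\<dots> = (\<Sum>i<d. of_int (cx (k div e + 1) i) * x ^ i) * (\<Sum>j<e. of_int (cy (k mod e + 1) j) * y ^ j)"
      by (simp add: sum_product)
    also have "\<dots> = x ^ (k div e + 1) * y ^ (k mod e + 1)"
      by (simp only: cx[symmetric] cy[symmetric])
    also have "\<dots> = ((x * y) \<cdot>\<^sub>v w) $ k"
      using k by (simp add: w_def algebra_simps)
    finally show "(map_mat of_int M *\<^sub>v w) $ k = ((x * y) \<cdot>\<^sub>v w) $ k" .
  qed (use M w in auto)
  then show ?thesis by (rule algebraic_int_eigenvalue_of_int_mat[OF M w w0])
qed

section \<open>Polynomial functions on C^N\<close>

lemma polyfun_scale: "f \<in> polyfun N \<Longrightarrow> (\<lambda>v. c * f v) \<in> polyfun N"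
  by (rule pf_mult[OF pf_const])

lemma polyfun_diff: "f \<in> polyfun N \<Longrightarrow> g \<in> polyfun N \<Longrightarrow> (\<lambda>v. f v - g v) \<in> polyfun N"
  using pf_add[OF _ polyfun_scale[of g N "-1"]] by simp

lemma polyfun_sum:
  "finite A \<Longrightarrow> (\<And>i. i \<in> A \<Longrightarrow> f i \<in> polyfun N) \<Longrightarrow> (\<lambda>v. \<Sum>i\<in>A. f i v) \<in> polyfun N"
  by (induction A rule: finite_induct) (simp_all add: pf_const pf_add)

lemma polyfun_prod:
  "finite A \<Longrightarrow> (\<And>i. i \<in> A \<Longrightarrow> f i \<in> polyfun N) \<Longrightarrow> (\<lambda>v. \<Prod>i\<in>A. f i v) \<in> polyfun N"
  by (induction A rule: finite_induct) (simp_all add: pf_const pf_mult)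

lemma polyfun_power: "f \<in> polyfun N \<Longrightarrow> (\<lambda>v. f v ^ k) \<in> polyfun N"
  by (induction k) (simp_all add: pf_const pf_mult)

lemma polyfun_if: "f \<in> polyfun N \<Longrightarrow> g \<in> polyfun N \<Longrightarrow> (\<lambda>v. if P then f v else g v) \<in> polyfun N"
  by (cases P) simp_all

lemma polyfun_det:
  assumes "\<And>v. A v \<in> carrier_mat d d"
    and "\<And>i j. i < d \<Longrightarrow> j < d \<Longrightarrow> (\<lambda>v. A v $$ (i, j)) \<in> polyfun N"
  shows "(\<lambda>v. det (A v)) \<in> polyfun N"
proof -
  have "(\<lambda>v. \<Sum>p\<in>{p. p permutes {0..<d}}. signof p * (\<Prod>i = 0..<d. A v $$ (i, p i))) \<in> polyfun N"
  proof (rule polyfun_sum)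
    fix p assume "p \<in> {p. p permutes {0..<d}}"
    then have "i < d \<Longrightarrow> p i < d" for i using permutes_in_image by fastforce
    then show "(\<lambda>v. signof p * (\<Prod>i = 0..<d. A v $$ (i, p i))) \<in> polyfun N"
      by (intro polyfun_scale polyfun_prod assms(2)) auto
  qed (simp add: finite_permutations)
  then show ?thesis using det_def'[OF assms(1)] by simp
qed

definition polyvec :: "nat \<Rightarrow> ((nat \<Rightarrow> complex) \<Rightarrow> nat \<Rightarrow> complex) \<Rightarrow> bool" where
  "polyvec N u \<longleftrightarrow> (\<forall>k. (\<lambda>v. u v k) \<in> polyfun N)"

lemma polyvecD: "polyvec N u \<Longrightarrow> (\<lambda>v. u v k) \<in> polyfun N"
  unfolding polyvec_def by blast

lemma polyvec_const: "polyvec N (\<lambda>v. c)"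
  unfolding polyvec_def by (simp add: pf_const)

lemma polyvec_add: "polyvec N u \<Longrightarrow> polyvec N w \<Longrightarrow> polyvec N (\<lambda>v k. u v k + w v k)"
  unfolding polyvec_def by (simp add: pf_add)

lemma polyvec_diff: "polyvec N u \<Longrightarrow> polyvec N w \<Longrightarrow> polyvec N (\<lambda>v k. u v k - w v k)"
  unfolding polyvec_def by (simp add: polyfun_diff)

lemma polyfun_holomorphic_slice: "f \<in> polyfun N \<Longrightarrow> (\<lambda>c. f (v(i := c))) holomorphic_on S"
proof (induction rule: polyfun.induct)
  case (pf_var j)
  then show ?case by (cases "j = i") (auto intro!: holomorphic_intros)
qed (auto intro!: holomorphic_intros)

lemma polyfun_nonzero_off_point:
  assumes f: "f \<in> polyfun N" and nz: "f v \<noteq> 0"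
  shows "\<exists>c. c \<noteq> v i \<and> f (v(i := c)) \<noteq> 0"
proof (rule ccontr)
  assume "\<not> ?thesis"
  then have zero: "f (v(i := c)) = 0" if "c \<in> UNIV - {v i}" for c using that by blast
  have lim: "v i islimpt (UNIV - {v i})" using islimpt_punctured[of "v i" UNIV] by simp
  have "(\<lambda>c. f (v(i := c))) (v i) = 0"
    by (rule analytic_continuation[where S = UNIV, OF polyfun_holomorphic_slice[OF f] _ _ _ _ lim zero]) auto
  then show False using nz by simp
qed

definition coord_slice :: "nat set \<Rightarrow> (nat \<Rightarrow> complex) \<Rightarrow> (nat \<Rightarrow> complex) set" where
  "coord_slice K v0 = {v. \<forall>i. i \<notin> K \<longrightarrow> v i = v0 i}"

text \<open>The coordinate ring of an affine subspace is a domain. Induction on its dimension: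
  for each value c of the new coordinate one factor vanishes on the corresponding smaller slice,
  so one factor does so for infinitely many c, and then for all c by the identity theorem.\<close>

lemma polyfun_mult_eq_zero_on_slice:
  assumes "finite K" "f \<in> polyfun N" "g \<in> polyfun N"
    and "\<forall>v\<in>coord_slice K v0. f v * g v = 0"
  shows "(\<forall>v\<in>coord_slice K v0. f v = 0) \<or> (\<forall>v\<in>coord_slice K v0. g v = 0)"
  using assms(1,4)
proof (induction K arbitrary: v0 rule: finite_induct)
  case empty
  then show ?case by (auto simp: coord_slice_def fun_eq_iff)
next
  case (insert k K)
  define zeros where "zeros h = {c. \<forall>v\<in>coord_slice K (v0(k := c)). h v = 0}"
    for h :: "(nat \<Rightarrow> complex) \<Rightarrow> complex"
  have sub: "coord_slice K (v0(k := c)) \<subseteq> coord_slice (insert k K) v0" for c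
    unfolding coord_slice_def by auto
  have "c \<in> zeros f \<union> zeros g" for c
    using insert.IH[of "v0(k := c)"] insert.prems sub[of c] unfolding zeros_def by blast
  then have "zeros f \<union> zeros g = UNIV" by blast
  then have "(0::complex) islimpt zeros f \<or> 0 islimpt zeros g"
    using islimpt_Un[of 0 "zeros f" "zeros g"] by simp
  moreover have "\<forall>v\<in>coord_slice (insert k K) v0. h v = 0"
    if lim: "0 islimpt zeros h" and h: "h \<in> polyfun N" for h
  proof
    fix v assume v: "v \<in> coord_slice (insert k K) v0"
    have "v(k := c) \<in> coord_slice K (v0(k := c))" for c
      using v insert.hyps(2) unfolding coord_slice_def by auto
    then have zero: "h (v(k := c)) = 0" if "c \<in> zeros h" for c
      using that unfolding zeros_def by blast
    have "(\<lambda>c. h (v(k := c))) (v k) = 0"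
      by (rule analytic_continuation[where S = UNIV, OF polyfun_holomorphic_slice[OF h] _ _ _ _ lim zero]) auto
    then show "h v = 0" by simp
  qed
  ultimately show ?case using assms(2,3) by blast
qed

lemma polyfun_comp_rational:
  assumes coords: "\<And>i. i < N \<Longrightarrow> \<exists>h\<in>polyfun M. \<forall>v. D v \<noteq> 0 \<longrightarrow> \<phi> v i = h v / D v"
    and D: "D \<in> polyfun M" and f: "f \<in> polyfun N"
  shows "\<exists>h k. h \<in> polyfun M \<and> (\<forall>v. D v \<noteq> 0 \<longrightarrow> f (\<phi> v) = h v / D v ^ k)"
  using f
proof (induction rule: polyfun.induct)
  case (pf_const c)
  show ?case by (intro exI[of _ "\<lambda>_. c"] exI[of _ 0]) (auto intro: polyfun.pf_const)
next
  case (pf_var i)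
  then show ?case using coords[of i] by (metis power_one_right)
next
  case (pf_add f g)
  then obtain h1 k1 h2 k2 where h: "h1 \<in> polyfun M" "\<forall>v. D v \<noteq> 0 \<longrightarrow> f (\<phi> v) = h1 v / D v ^ k1"
    "h2 \<in> polyfun M" "\<forall>v. D v \<noteq> 0 \<longrightarrow> g (\<phi> v) = h2 v / D v ^ k2" by blast
  show ?case
  proof (intro exI conjI allI impI)
    show "(\<lambda>v. h1 v * D v ^ k2 + h2 v * D v ^ k1) \<in> polyfun M"
      using h D by (intro polyfun.pf_add polyfun.pf_mult polyfun_power)
    fix v assume "D v \<noteq> 0"
    then show "f (\<phi> v) + g (\<phi> v) = (h1 v * D v ^ k2 + h2 v * D v ^ k1) / D v ^ (k1 + k2)"
      using h by (simp add: power_add add_divide_distrib)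
  qed
next
  case (pf_mult f g)
  then obtain h1 k1 h2 k2 where h: "h1 \<in> polyfun M" "\<forall>v. D v \<noteq> 0 \<longrightarrow> f (\<phi> v) = h1 v / D v ^ k1"
    "h2 \<in> polyfun M" "\<forall>v. D v \<noteq> 0 \<longrightarrow> g (\<phi> v) = h2 v / D v ^ k2" by blast
  show ?case
  proof (intro exI conjI allI impI)
    show "(\<lambda>v. h1 v * h2 v) \<in> polyfun M" using h by (intro polyfun.pf_mult)
    fix v assume "D v \<noteq> 0"
    then show "f (\<phi> v) * g (\<phi> v) = (h1 v * h2 v) / D v ^ (k1 + k2)"
      using h by (simp add: power_add)
  qed
qed

section \<open>Coordinate rings and a lower bound for the dimension\<close>

lemma coord_ring_carrier_iff: "x \<in> carrier (coord_ring N A) \<longleftrightarrow> (\<exists>f\<in>polyfun N. x = restrict f A)"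
  unfolding coord_ring_def by auto

lemma coord_ring_simps:
  "x \<otimes>\<^bsub>coord_ring N A\<^esub> y = restrict (\<lambda>v. x v * y v) A"
  "x \<oplus>\<^bsub>coord_ring N A\<^esub> y = restrict (\<lambda>v. x v + y v) A"
  "\<one>\<^bsub>coord_ring N A\<^esub> = restrict (\<lambda>_. 1) A"
  "\<zero>\<^bsub>coord_ring N A\<^esub> = restrict (\<lambda>_. 0) A"
  unfolding coord_ring_def by auto

lemma coord_ring_closed:
  assumes "x \<in> carrier (coord_ring N A)" "y \<in> carrier (coord_ring N A)"
  shows "restrict (\<lambda>v. x v + y v) A \<in> carrier (coord_ring N A)"
    and "restrict (\<lambda>v. x v * y v) A \<in> carrier (coord_ring N A)"
proof -
  obtain f g where fg: "f \<in> polyfun N" "g \<in> polyfun N" "x = restrict f A" "y = restrict g A"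
    using assms by (auto simp: coord_ring_carrier_iff)
  have "restrict (\<lambda>v. x v + y v) A = restrict (\<lambda>v. f v + g v) A"
    "restrict (\<lambda>v. x v * y v) A = restrict (\<lambda>v. f v * g v) A"
    using fg by (auto simp: restrict_def)
  then show "restrict (\<lambda>v. x v + y v) A \<in> carrier (coord_ring N A)"
    "restrict (\<lambda>v. x v * y v) A \<in> carrier (coord_ring N A)"
    unfolding coord_ring_carrier_iff using fg by (metis pf_add pf_mult)+
qed

lemma coord_ring_uminus_closed:
  assumes "x \<in> carrier (coord_ring N A)"
  shows "restrict (\<lambda>v. - x v) A \<in> carrier (coord_ring N A)"
proof -
  obtain f where f: "f \<in> polyfun N" "x = restrict f A"
    using assms by (auto simp: coord_ring_carrier_iff)
  have "restrict (\<lambda>v. - x v) A = restrict (\<lambda>v. (-1) * f v) A"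
    using f by (auto simp: restrict_def)
  then show ?thesis unfolding coord_ring_carrier_iff using f by (metis polyfun_scale)
qed

lemma cring_coord_ring: "cring (coord_ring N A)"
proof (rule cringI)
  have const: "restrict (\<lambda>_. c) A \<in> carrier (coord_ring N A)" for c
    unfolding coord_ring_carrier_iff using pf_const by blast
  have undef: "x v = undefined" if "x \<in> carrier (coord_ring N A)" "v \<notin> A" for x v
    using that by (auto simp: coord_ring_carrier_iff)
  show "abelian_group (coord_ring N A)"
  proof (rule abelian_groupI)
    fix x assume x: "x \<in> carrier (coord_ring N A)"
    show "\<zero>\<^bsub>coord_ring N A\<^esub> \<oplus>\<^bsub>coord_ring N A\<^esub> x = x"
      using undef[OF x] by (auto simp: coord_ring_simps restrict_def)
    show "\<exists>y\<in>carrier (coord_ring N A). y \<oplus>\<^bsub>coord_ring N A\<^esub> x = \<zero>\<^bsub>coord_ring N A\<^esub>"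
      by (rule bexI[OF _ coord_ring_uminus_closed[OF x]]) (auto simp: coord_ring_simps restrict_def)
  next
    fix x y assume "x \<in> carrier (coord_ring N A)" "y \<in> carrier (coord_ring N A)"
    then show "x \<oplus>\<^bsub>coord_ring N A\<^esub> y \<in> carrier (coord_ring N A)"
      unfolding coord_ring_simps by (rule coord_ring_closed)
  next
    show "\<zero>\<^bsub>coord_ring N A\<^esub> \<in> carrier (coord_ring N A)" unfolding coord_ring_simps by (rule const)
  qed (auto simp: coord_ring_simps restrict_def add_ac)
  show "comm_monoid (coord_ring N A)"
  proof (rule comm_monoidI)
    fix x assume x: "x \<in> carrier (coord_ring N A)"
    show "\<one>\<^bsub>coord_ring N A\<^esub> \<otimes>\<^bsub>coord_ring N A\<^esub> x = x"
      using undef[OF x] by (auto simp: coord_ring_simps restrict_def)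
  next
    fix x y assume "x \<in> carrier (coord_ring N A)" "y \<in> carrier (coord_ring N A)"
    then show "x \<otimes>\<^bsub>coord_ring N A\<^esub> y \<in> carrier (coord_ring N A)"
      unfolding coord_ring_simps by (rule coord_ring_closed)
  next
    show "\<one>\<^bsub>coord_ring N A\<^esub> \<in> carrier (coord_ring N A)" unfolding coord_ring_simps by (rule const)
  qed (auto simp: coord_ring_simps restrict_def mult_ac)
qed (auto simp: coord_ring_simps restrict_def distrib_right)

lemma coord_ring_minus:
  assumes x: "x \<in> carrier (coord_ring N A)"
  shows "\<ominus>\<^bsub>coord_ring N A\<^esub> x = restrict (\<lambda>v. - x v) A"
proof -
  interpret cring "coord_ring N A" by (rule cring_coord_ring)
  show ?thesis
    by (rule minus_equality) (use coord_ring_uminus_closed[OF x] x in \<open>auto simp: coord_ring_simps restrict_def\<close>)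
qed

definition param_ideal ::
    "nat \<Rightarrow> (nat \<Rightarrow> complex) set \<Rightarrow> ((nat \<Rightarrow> complex) \<Rightarrow> complex)
      \<Rightarrow> ((nat \<Rightarrow> complex) \<Rightarrow> nat \<Rightarrow> complex) \<Rightarrow> nat set \<Rightarrow> ((nat \<Rightarrow> complex) \<Rightarrow> complex) set" where
  "param_ideal N A D \<phi> K =
     {f \<in> carrier (coord_ring N A). \<forall>v\<in>coord_slice K (\<lambda>_. 0). D v \<noteq> 0 \<longrightarrow> f (\<phi> v) = 0}"

lemma primeideal_param_ideal:
  assumes K: "finite K"
    and D: "D \<in> polyfun M" "D (\<lambda>_. 0) \<noteq> 0"
    and coords: "\<And>i. i < N \<Longrightarrow> \<exists>h\<in>polyfun M. \<forall>v. D v \<noteq> 0 \<longrightarrow> \<phi> v i = h v / D v"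
    and img: "\<And>v. D v \<noteq> 0 \<Longrightarrow> \<phi> v \<in> A"
  shows "primeideal (param_ideal N A D \<phi> K) (coord_ring N A)"
proof -
  let ?R = "coord_ring N A" and ?S = "coord_slice K (\<lambda>_. 0)"
  interpret cring ?R by (rule cring_coord_ring)
  have zero_in_slice: "(\<lambda>_. 0) \<in> ?S" unfolding coord_slice_def by simp
  have vanishing_factor: "f \<in> param_ideal N A D \<phi> K \<or> g \<in> param_ideal N A D \<phi> K"
    if f: "f \<in> carrier ?R" and g: "g \<in> carrier ?R" and fg: "f \<otimes>\<^bsub>?R\<^esub> g \<in> param_ideal N A D \<phi> K" for f g
  proof -
    obtain f' g' where f': "f' \<in> polyfun N" "f = restrict f' A" and g': "g' \<in> polyfun N" "g = restrict g' A"
      using f g by (auto simp: coord_ring_carrier_iff)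
    obtain hf kf where hf: "hf \<in> polyfun M" "\<And>v. D v \<noteq> 0 \<Longrightarrow> f (\<phi> v) = hf v / D v ^ kf"
      using polyfun_comp_rational[where \<phi> = \<phi>, OF coords D(1) f'(1)] f'(2) img by auto
    obtain hg kg where hg: "hg \<in> polyfun M" "\<And>v. D v \<noteq> 0 \<Longrightarrow> g (\<phi> v) = hg v / D v ^ kg"
      using polyfun_comp_rational[where \<phi> = \<phi>, OF coords D(1) g'(1)] g'(2) img by auto
    have "\<forall>v\<in>?S. (hf v * hg v) * D v = 0"
    proof
      fix v assume "v \<in> ?S"
      then have "D v \<noteq> 0 \<Longrightarrow> f (\<phi> v) * g (\<phi> v) = 0"
        using fg img unfolding param_ideal_def by (auto simp: coord_ring_simps)
      then show "(hf v * hg v) * D v = 0" using hf(2) hg(2) by (cases "D v = 0") auto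
    qed
    then have "\<forall>v\<in>?S. hf v * hg v = 0"
      using polyfun_mult_eq_zero_on_slice[OF K pf_mult[OF hf(1) hg(1)] D(1)] D(2) zero_in_slice
      by blast
    then have "(\<forall>v\<in>?S. hf v = 0) \<or> (\<forall>v\<in>?S. hg v = 0)"
      using polyfun_mult_eq_zero_on_slice[OF K hf(1) hg(1)] by blast
    then show ?thesis using f g hf(2) hg(2) unfolding param_ideal_def by auto
  qed
  have carrier: "f \<in> carrier ?R" if "f \<in> param_ideal N A D \<phi> K" for f
    using that unfolding param_ideal_def by blast
  have add_mem: "f \<oplus>\<^bsub>?R\<^esub> g \<in> param_ideal N A D \<phi> K"
    if "f \<in> param_ideal N A D \<phi> K" "g \<in> param_ideal N A D \<phi> K" for f g
    using that img coord_ring_closed(1)[OF carrier carrier]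
    unfolding param_ideal_def coord_ring_simps by auto
  have uminus_mem: "\<ominus>\<^bsub>?R\<^esub> f \<in> param_ideal N A D \<phi> K" if "f \<in> param_ideal N A D \<phi> K" for f
    using that img coord_ring_uminus_closed[OF carrier]
    unfolding param_ideal_def coord_ring_minus[OF carrier[OF that]] by auto
  have mult_mem: "f \<otimes>\<^bsub>?R\<^esub> h \<in> param_ideal N A D \<phi> K" "h \<otimes>\<^bsub>?R\<^esub> f \<in> param_ideal N A D \<phi> K"
    if "f \<in> param_ideal N A D \<phi> K" "h \<in> carrier ?R" for f h
    using that img coord_ring_closed(2)[OF carrier that(2)] coord_ring_closed(2)[OF that(2) carrier]
    unfolding param_ideal_def coord_ring_simps by auto
  show ?thesis
  proof (rule primeidealI2)
    show "additive_subgroup (param_ideal N A D \<phi> K) ?R"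
    proof (rule additive_subgroupI, rule add.subgroupI)
      show "param_ideal N A D \<phi> K \<subseteq> carrier ?R" unfolding param_ideal_def by blast
      have "\<zero>\<^bsub>?R\<^esub> \<in> param_ideal N A D \<phi> K"
        using zero_closed img unfolding param_ideal_def by (auto simp: coord_ring_simps)
      then show "param_ideal N A D \<phi> K \<noteq> {}" by blast
    next
      fix f assume "f \<in> param_ideal N A D \<phi> K"
      then show "\<ominus>\<^bsub>?R\<^esub> f \<in> param_ideal N A D \<phi> K" by (rule uminus_mem)
    next
      fix f g assume "f \<in> param_ideal N A D \<phi> K" "g \<in> param_ideal N A D \<phi> K"
      then show "f \<oplus>\<^bsub>?R\<^esub> g \<in> param_ideal N A D \<phi> K" by (rule add_mem)
    qed
  next
    have "\<one>\<^bsub>?R\<^esub> \<notin> param_ideal N A D \<phi> K"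
      using img[OF D(2)] zero_in_slice D(2) unfolding param_ideal_def by (auto simp: coord_ring_simps)
    then show "carrier ?R \<noteq> param_ideal N A D \<phi> K" using one_closed by blast
  next
    fix f h assume "f \<in> param_ideal N A D \<phi> K" "h \<in> carrier ?R"
    then show "h \<otimes>\<^bsub>?R\<^esub> f \<in> param_ideal N A D \<phi> K" by (rule mult_mem(2))
  next
    fix f h assume "f \<in> param_ideal N A D \<phi> K" "h \<in> carrier ?R"
    then show "f \<otimes>\<^bsub>?R\<^esub> h \<in> param_ideal N A D \<phi> K" by (rule mult_mem(1))
  next
    fix f g assume "f \<in> carrier ?R" "g \<in> carrier ?R" "f \<otimes>\<^bsub>?R\<^esub> g \<in> param_ideal N A D \<phi> K"
    then show "f \<in> param_ideal N A D \<phi> K \<or> g \<in> param_ideal N A D \<phi> K" by (rule vanishing_factor)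
  qed (rule cring_coord_ring)
qed

lemma alg_set_dim_geI:
  assumes "\<And>i. i \<le> d \<Longrightarrow> primeideal (P i) (coord_ring N A)" and "\<And>i. i < d \<Longrightarrow> P i \<subset> P (Suc i)"
  shows "enat d \<le> alg_set_dim N A"
  unfolding alg_set_dim_def using assms by (intro Sup_upper) blast

text \<open>The prime ideals param_ideal for the coordinate subspaces {..<M - j}, j = 0..M, form
  a chain; the separating functions make it strict.\<close>

theorem alg_set_dim_ge_rational_param:
  assumes D: "D \<in> polyfun M" "D (\<lambda>_. 0) \<noteq> 0"
    and coords: "\<And>i. i < N \<Longrightarrow> \<exists>h\<in>polyfun M. \<forall>v. D v \<noteq> 0 \<longrightarrow> \<phi> v i = h v / D v"
    and img: "\<And>v. D v \<noteq> 0 \<Longrightarrow> \<phi> v \<in> A"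
    and separating: "\<And>p. p < M \<Longrightarrow> \<exists>G\<in>polyfun N. \<forall>v. D v \<noteq> 0 \<longrightarrow> (G (\<phi> v) = 0 \<longleftrightarrow> v p = 0)"
  shows "enat M \<le> alg_set_dim N A"
proof (rule alg_set_dim_geI)
  let ?P = "\<lambda>j. param_ideal N A D \<phi> {..<M - j}"
  show "primeideal (?P j) (coord_ring N A)" for j
    by (rule primeideal_param_ideal[OF _ D coords img]) simp_all
  fix j assume j: "j < M"
  define p where "p = M - Suc j"
  have p: "p < M" "p < M - j" "{..<M - Suc j} = {..<p}" using j unfolding p_def by auto
  obtain G where G: "G \<in> polyfun N" "\<And>v. D v \<noteq> 0 \<Longrightarrow> G (\<phi> v) = 0 \<longleftrightarrow> v p = 0"
    using separating[OF p(1)] by blast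
  have "coord_slice {..<M - Suc j} (\<lambda>_. 0) \<subseteq> coord_slice {..<M - j} (\<lambda>_. 0)"
    unfolding coord_slice_def by auto
  then have "?P j \<subseteq> ?P (Suc j)" unfolding param_ideal_def by blast
  moreover have "restrict G A \<in> ?P (Suc j)"
    unfolding param_ideal_def
  proof (intro CollectI conjI ballI impI)
    show "restrict G A \<in> carrier (coord_ring N A)"
      unfolding coord_ring_carrier_iff using G(1) by blast
    fix v assume "v \<in> coord_slice {..<M - Suc j} (\<lambda>_. 0)" "D v \<noteq> 0"
    then show "restrict G A (\<phi> v) = 0"
      using G(2) img unfolding p(3) coord_slice_def by simp
  qed
  moreover have "restrict G A \<notin> ?P j"
  proof
    assume G_in: "restrict G A \<in> ?P j"
    obtain c where c: "c \<noteq> 0" "D ((\<lambda>_. 0)(p := c)) \<noteq> 0"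
      using polyfun_nonzero_off_point[OF D, of p] by (auto simp del: fun_upd_apply)
    have "(\<lambda>_. 0)(p := c) \<in> coord_slice {..<M - j} (\<lambda>_. 0)"
      using p(2) unfolding coord_slice_def by simp
    then have "G (\<phi> ((\<lambda>_. 0)(p := c))) = 0"
      using G_in c(2) img[OF c(2)] unfolding param_ideal_def by auto
    then show False using G(2)[OF c(2)] c(1) by simp
  qed
  ultimately show "?P j \<subset> ?P (Suc j)" by blast
qed

section \<open>The ring of integers and its complexification\<close>

lemma sum_delta_mult:
  "finite A \<Longrightarrow> (\<Sum>k\<in>A. (if k = j then c else 0) * f k) = (if j \<in> A then c * f j else (0 :: 'a :: comm_semiring_1))"
  by (simp add: if_distrib[of "\<lambda>x. x * _"] sum.delta' cong: if_cong)

lemma sum_swap_outer_inner: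
  "(\<Sum>a\<in>A. \<Sum>b\<in>B. \<Sum>c\<in>C. \<Sum>d\<in>E. f a b c d) = (\<Sum>c\<in>C. \<Sum>d\<in>E. \<Sum>b\<in>B. \<Sum>a\<in>A. (f a b c d :: 'a :: comm_monoid_add))"
proof -
  have "(\<Sum>a\<in>A. \<Sum>b\<in>B. \<Sum>c\<in>C. \<Sum>d\<in>E. f a b c d) = (\<Sum>a\<in>A. \<Sum>c\<in>C. \<Sum>b\<in>B. \<Sum>d\<in>E. f a b c d)"
    by (rule sum.cong[OF refl], rule sum.swap)
  also have "\<dots> = (\<Sum>a\<in>A. \<Sum>c\<in>C. \<Sum>d\<in>E. \<Sum>b\<in>B. f a b c d)"
    by (rule sum.cong[OF refl], rule sum.cong[OF refl], rule sum.swap)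
  also have "\<dots> = (\<Sum>c\<in>C. \<Sum>a\<in>A. \<Sum>d\<in>E. \<Sum>b\<in>B. f a b c d)" by (rule sum.swap)
  also have "\<dots> = (\<Sum>c\<in>C. \<Sum>d\<in>E. \<Sum>a\<in>A. \<Sum>b\<in>B. f a b c d)"
    by (rule sum.cong[OF refl], rule sum.swap)
  also have "\<dots> = (\<Sum>c\<in>C. \<Sum>d\<in>E. \<Sum>b\<in>B. \<Sum>a\<in>A. f a b c d)"
    by (rule sum.cong[OF refl], rule sum.cong[OF refl], rule sum.swap)
  finally show ?thesis .
qed

locale integral_basis_of_field =
  fixes F :: "real set" and n :: nat and \<theta> :: "nat \<Rightarrow> real"
  assumes subfield: "real_subfield F"
    and basis: "integral_basis F n \<theta>"
    and basis_0: "\<theta> 0 = 1"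
begin

abbreviation R :: "real set" where "R \<equiv> ring_of_integers F"

lemma mem_R_iff: "x \<in> R \<longleftrightarrow> x \<in> F \<and> algebraic_int x"
  unfolding ring_of_integers_def algebraic_int_altdef_ipoly by auto

lemma R_mult: "x \<in> R \<Longrightarrow> y \<in> R \<Longrightarrow> x * y \<in> R"
  using subfield algebraic_int_times unfolding mem_R_iff real_subfield_def by blast

lemma basis_in_R: "i < n \<Longrightarrow> \<theta> i \<in> R"
  using basis unfolding integral_basis_def by blast

lemma zcoord:
  assumes "x \<in> R"
  shows "\<forall>k\<ge>n. zcoord n \<theta> x k = 0" and "x = (\<Sum>k<n. of_int (zcoord n \<theta> x k) * \<theta> k)"
proof -
  have "\<exists>!c :: nat \<Rightarrow> int. (\<forall>k\<ge>n. c k = 0) \<and> x = (\<Sum>k<n. of_int (c k) * \<theta> k)"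
    using basis assms unfolding integral_basis_def by blast
  then have "(\<forall>k\<ge>n. zcoord n \<theta> x k = 0) \<and> x = (\<Sum>k<n. of_int (zcoord n \<theta> x k) * \<theta> k)"
    unfolding zcoord_def by (rule theI')
  then show "\<forall>k\<ge>n. zcoord n \<theta> x k = 0" "x = (\<Sum>k<n. of_int (zcoord n \<theta> x k) * \<theta> k)" by blast+
qed

lemma zcoord_unique:
  assumes "x \<in> R" "\<forall>k\<ge>n. c k = 0" "x = (\<Sum>k<n. of_int (c k) * \<theta> k)"
  shows "zcoord n \<theta> x = c"
proof -
  have "\<exists>!c :: nat \<Rightarrow> int. (\<forall>k\<ge>n. c k = 0) \<and> x = (\<Sum>k<n. of_int (c k) * \<theta> k)"
    using basis assms unfolding integral_basis_def by blast
  then show ?thesis using zcoord[OF assms(1)] assms(2,3) by blast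
qed

lemma zcoord_basis: "j < n \<Longrightarrow> zcoord n \<theta> (\<theta> j) = (\<lambda>k. if k = j then 1 else 0)"
  by (rule zcoord_unique) (auto simp: basis_in_R if_distrib[of of_int] sum_delta_mult cong: if_cong)

lemma n_pos: "0 < n"
proof (rule ccontr)
  assume "\<not> 0 < n"
  moreover have "1 \<in> R"
    using subfield unfolding mem_R_iff real_subfield_def by simp
  ultimately show False using zcoord(2)[of 1] by simp
qed

lemma zcoord_one: "zcoord n \<theta> 1 = (\<lambda>k. if k = 0 then 1 else 0)"
  using zcoord_basis[OF n_pos] basis_0 by simp

definition struct_const :: "nat \<Rightarrow> nat \<Rightarrow> nat \<Rightarrow> int" where
  "struct_const i j k = zcoord n \<theta> (\<theta> i * \<theta> j) k"

lemma struct_const_commute: "struct_const i j k = struct_const j i k"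
  unfolding struct_const_def by (simp add: mult.commute)

lemma struct_const_vanishes: "i < n \<Longrightarrow> j < n \<Longrightarrow> n \<le> k \<Longrightarrow> struct_const i j k = 0"
  unfolding struct_const_def using zcoord(1) R_mult basis_in_R by blast

lemma basis_mult: "i < n \<Longrightarrow> j < n \<Longrightarrow> \<theta> i * \<theta> j = (\<Sum>k<n. of_int (struct_const i j k) * \<theta> k)"
  unfolding struct_const_def using zcoord(2) R_mult basis_in_R by blast

lemma struct_const_one: "j < n \<Longrightarrow> struct_const 0 j k = (if k = j then 1 else 0)"
  unfolding struct_const_def using basis_0 zcoord_basis by simp

lemma zcoord_mult:
  assumes x: "x \<in> R" and y: "y \<in> R"
  shows "zcoord n \<theta> (x * y) k = (\<Sum>l<n. \<Sum>p<n. zcoord n \<theta> x l * zcoord n \<theta> y p * struct_const l p k)"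
proof -
  define c where "c k = (\<Sum>l<n. \<Sum>p<n. zcoord n \<theta> x l * zcoord n \<theta> y p * struct_const l p k)" for k
  have "x * y = (\<Sum>l<n. \<Sum>p<n. of_int (zcoord n \<theta> x l) * of_int (zcoord n \<theta> y p) * (\<theta> l * \<theta> p))"
    by (subst zcoord(2)[OF x], subst zcoord(2)[OF y]) (simp add: sum_product algebra_simps)
  also have "\<dots> = (\<Sum>l<n. \<Sum>p<n. \<Sum>k<n. of_int (zcoord n \<theta> x l * zcoord n \<theta> y p * struct_const l p k) * \<theta> k)"
    by (simp add: basis_mult sum_distrib_left algebra_simps)
  also have "\<dots> = (\<Sum>k<n. of_int (c k) * \<theta> k)"
    unfolding c_def of_int_sum sum_distrib_right
    by (subst sum.swap, rule sum.cong, simp, subst sum.swap, simp)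
  finally have "x * y = (\<Sum>k<n. of_int (c k) * \<theta> k)" .
  moreover have "\<forall>k\<ge>n. c k = 0" unfolding c_def by (auto simp: struct_const_vanishes)
  ultimately have "zcoord n \<theta> (x * y) = c" by (intro zcoord_unique R_mult x y)
  then show ?thesis unfolding c_def by simp
qed

lemma struct_const_assoc:
  assumes "i < n" "j < n" "l < n"
  shows "(\<Sum>p<n. struct_const i j p * struct_const p l k) = (\<Sum>p<n. struct_const j l p * struct_const i p k)"
proof -
  have ij: "\<theta> i * \<theta> j \<in> R" and jl: "\<theta> j * \<theta> l \<in> R" using assms by (auto intro!: R_mult basis_in_R)
  have "zcoord n \<theta> (\<theta> i * \<theta> j * \<theta> l) k
      = (\<Sum>p<n. \<Sum>q<n. struct_const i j p * (if q = l then 1 else 0) * struct_const p q k)"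
    using zcoord_mult[OF ij basis_in_R[OF assms(3)]] zcoord_basis[OF assms(3)] unfolding struct_const_def by simp
  also have "\<dots> = (\<Sum>p<n. struct_const i j p * struct_const p l k)"
    using assms by (simp add: mult.commute[of "struct_const i j _"] mult.assoc sum_delta_mult)
  finally have 1: "zcoord n \<theta> (\<theta> i * \<theta> j * \<theta> l) k = (\<Sum>p<n. struct_const i j p * struct_const p l k)" .
  have "zcoord n \<theta> (\<theta> i * (\<theta> j * \<theta> l)) k
      = (\<Sum>p<n. \<Sum>q<n. (if p = i then 1 else 0) * struct_const j l q * struct_const p q k)"
    using zcoord_mult[OF basis_in_R[OF assms(1)] jl] zcoord_basis[OF assms(1)] unfolding struct_const_def by simp
  also have "\<dots> = (\<Sum>q<n. struct_const j l q * struct_const i q k)"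
    using assms by (simp add: sum.swap[of _ "{..<n}" "{..<n}"] mult.assoc sum_delta_mult)
  finally show ?thesis using 1 by (simp add: mult.assoc)
qed

text \<open>R \<otimes> C is modelled as the complex vectors supported on {..<n}, multiplied with the
  structure constants of R.\<close>

definition tvecs :: "(nat \<Rightarrow> complex) set" where
  "tvecs = {u. \<forall>k\<ge>n. u k = 0}"

definition tmult :: "(nat \<Rightarrow> complex) \<Rightarrow> (nat \<Rightarrow> complex) \<Rightarrow> nat \<Rightarrow> complex" where
  "tmult u w = (\<lambda>k. \<Sum>i<n. \<Sum>j<n. of_int (struct_const i j k) * u i * w j)"

definition tone :: "nat \<Rightarrow> complex" where
  "tone = (\<lambda>k. if k = 0 then 1 else 0)"

definition tensor_ring :: "(nat \<Rightarrow> complex) ring" where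
  "tensor_ring = \<lparr>carrier = tvecs, monoid.mult = tmult, one = tone, zero = (\<lambda>_. 0), add = (\<lambda>u w k. u k + w k)\<rparr>"

definition of_R :: "real \<Rightarrow> nat \<Rightarrow> complex" where
  "of_R c = (\<lambda>k. of_int (zcoord n \<theta> c k))"

lemma tmult_in_tvecs: "tmult u w \<in> tvecs"
  unfolding tvecs_def tmult_def by (auto simp: struct_const_vanishes)

lemma tone_in_tvecs: "tone \<in> tvecs"
  unfolding tvecs_def tone_def using n_pos by auto

lemma tmult_commute: "tmult u w = tmult w u"
proof (rule ext)
  fix k
  have "tmult u w k = (\<Sum>j<n. \<Sum>i<n. of_int (struct_const i j k) * u i * w j)"
    unfolding tmult_def by (rule sum.swap)
  then show "tmult u w k = tmult w u k"
    unfolding tmult_def by (simp add: struct_const_commute[of _ _ k] mult_ac)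
qed

lemma tmult_tone:
  assumes u: "u \<in> tvecs"
  shows "tmult tone u = u"
proof (rule ext)
  fix k
  have "tmult tone u k = (\<Sum>i<n. if i = 0 then (\<Sum>j<n. of_int (struct_const 0 j k) * u j) else 0)"
    unfolding tmult_def tone_def by (intro sum.cong) auto
  also have "\<dots> = (\<Sum>j<n. of_int (struct_const 0 j k) * u j)"
    using n_pos by (simp add: sum.delta')
  also have "\<dots> = (\<Sum>j<n. (if j = k then 1 else 0) * u j)"
    by (intro sum.cong refl) (auto simp: struct_const_one)
  also have "\<dots> = u k" using u unfolding tvecs_def by (auto simp: sum_delta_mult)
  finally show "tmult tone u k = u k" .
qed

lemma tmult_assoc: "tmult (tmult u w) s = tmult u (tmult w s)"
proof (rule ext)
  fix k
  define C where "C i j k = (of_int (struct_const i j k) :: complex)" for i j k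
  have assoc: "(\<Sum>p<n. C i j p * C p l k) = (\<Sum>p<n. C j l p * C i p k)"
    if "i < n" "j < n" "l < n" for i j l
    using arg_cong[OF struct_const_assoc[OF that, of k], of "of_int :: int \<Rightarrow> complex"]
    unfolding C_def by simp
  have "tmult (tmult u w) s k = (\<Sum>p<n. \<Sum>l<n. \<Sum>i<n. \<Sum>j<n. C p l k * (C i j p * u i * w j) * s l)"
    unfolding tmult_def C_def[symmetric] by (simp add: sum_distrib_left sum_distrib_right)
  also have "\<dots> = (\<Sum>i<n. \<Sum>j<n. \<Sum>l<n. \<Sum>p<n. C p l k * (C i j p * u i * w j) * s l)"
    by (rule sum_swap_outer_inner)
  also have "\<dots> = (\<Sum>i<n. \<Sum>j<n. \<Sum>l<n. (u i * w j * s l) * (\<Sum>p<n. C i j p * C p l k))"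
    by (simp add: sum_distrib_left algebra_simps)
  also have "\<dots> = (\<Sum>i<n. \<Sum>j<n. \<Sum>l<n. (u i * w j * s l) * (\<Sum>p<n. C j l p * C i p k))"
    by (intro sum.cong refl) (simp add: assoc)
  also have "\<dots> = (\<Sum>i<n. \<Sum>j<n. \<Sum>l<n. \<Sum>p<n. C i p k * u i * (C j l p * w j * s l))"
    by (simp add: sum_distrib_left algebra_simps)
  also have "\<dots> = (\<Sum>i<n. \<Sum>j<n. \<Sum>p<n. \<Sum>l<n. C i p k * u i * (C j l p * w j * s l))"
    by (rule sum.cong[OF refl], rule sum.cong[OF refl], rule sum.swap)
  also have "\<dots> = (\<Sum>i<n. \<Sum>p<n. \<Sum>j<n. \<Sum>l<n. C i p k * u i * (C j l p * w j * s l))"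
    by (rule sum.cong[OF refl], rule sum.swap)
  also have "\<dots> = tmult u (tmult w s) k"
    unfolding tmult_def C_def[symmetric] by (simp add: sum_distrib_left sum_distrib_right)
  finally show "tmult (tmult u w) s k = tmult u (tmult w s) k" .
qed

lemma tmult_add_left: "tmult (\<lambda>k. u k + w k) s = (\<lambda>k. tmult u s k + tmult w s k)"
  unfolding tmult_def by (auto simp: algebra_simps sum.distrib)

lemma cring_tensor_ring: "cring tensor_ring"
proof (rule cringI)
  show "abelian_group tensor_ring"
  proof (rule abelian_groupI)
    show "\<And>x. x \<in> carrier tensor_ring \<Longrightarrow> \<exists>y\<in>carrier tensor_ring. y \<oplus>\<^bsub>tensor_ring\<^esub> x = \<zero>\<^bsub>tensor_ring\<^esub>"
      by (rule_tac x="\<lambda>k. - x k" in bexI) (auto simp: tensor_ring_def tvecs_def)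
  qed (auto simp: tensor_ring_def tvecs_def add_ac)
  show "comm_monoid tensor_ring"
  proof (rule comm_monoidI)
    fix x y z
    show "x \<otimes>\<^bsub>tensor_ring\<^esub> y \<otimes>\<^bsub>tensor_ring\<^esub> z = x \<otimes>\<^bsub>tensor_ring\<^esub> (y \<otimes>\<^bsub>tensor_ring\<^esub> z)"
      by (simp add: tensor_ring_def tmult_assoc)
    show "x \<otimes>\<^bsub>tensor_ring\<^esub> y = y \<otimes>\<^bsub>tensor_ring\<^esub> x"
      by (simp add: tensor_ring_def tmult_commute[of x y])
  qed (auto simp: tensor_ring_def tmult_in_tvecs tone_in_tvecs tmult_tone)
qed (simp add: tensor_ring_def tmult_add_left)

lemma tensor_ring_simps:
  "carrier tensor_ring = tvecs" "x \<otimes>\<^bsub>tensor_ring\<^esub> y = tmult x y" "\<one>\<^bsub>tensor_ring\<^esub> = tone"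
  "x \<oplus>\<^bsub>tensor_ring\<^esub> y = (\<lambda>k. x k + y k)"
  by (auto simp: tensor_ring_def)

lemma tensor_ring_minus:
  assumes "x \<in> tvecs" "y \<in> tvecs"
  shows "x \<ominus>\<^bsub>tensor_ring\<^esub> y = (\<lambda>k. x k - y k)"
proof -
  interpret cring tensor_ring by (rule cring_tensor_ring)
  have "\<ominus>\<^bsub>tensor_ring\<^esub> y = (\<lambda>k. - y k)"
    by (rule minus_equality) (use assms in \<open>auto simp: tensor_ring_def tvecs_def\<close>)
  then show ?thesis by (simp add: a_minus_def tensor_ring_simps)
qed

lemma tmult_cong:
  "(\<And>i. i < n \<Longrightarrow> u i = u' i) \<Longrightarrow> (\<And>i. i < n \<Longrightarrow> w i = w' i) \<Longrightarrow> tmult u w = tmult u' w'"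
  unfolding tmult_def by (intro ext sum.cong refl) auto

lemma tmult_divide: "tmult u (\<lambda>k. w k / c) = (\<lambda>k. tmult u w k / c)"
  unfolding tmult_def by (auto simp: sum_divide_distrib)

lemma tmult_divide_left: "tmult (\<lambda>k. w k / c) u = (\<lambda>k. tmult w u k / c)"
  unfolding tmult_def by (auto simp: sum_divide_distrib)

lemma tmult_scale: "tmult u (\<lambda>k. c * w k) = (\<lambda>k. c * tmult u w k)"
  unfolding tmult_def by (auto simp: algebra_simps sum_distrib_left)

lemma of_R_one: "of_R 1 = tone"
  unfolding of_R_def tone_def zcoord_one by auto

lemma of_R_mult: "c \<in> R \<Longrightarrow> d \<in> R \<Longrightarrow> of_R (c * d) = tmult (of_R c) (of_R d)"
  unfolding of_R_def tmult_def by (rule ext) (simp add: zcoord_mult mult_ac)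

lemma of_R_in_tvecs: "c \<in> R \<Longrightarrow> of_R c \<in> tvecs"
  unfolding of_R_def tvecs_def using zcoord(1) by simp

lemma quad_coord_eq_tmult: "quad_coord n \<theta> c w k = tmult (of_R c) (tmult w w) k"
  unfolding quad_coord_def tmult_def of_R_def struct_const_def
  by (simp add: sum_distrib_left mult_ac)

text \<open>tnorm is the norm of R \<otimes> C over C, and tadj w is the first column of the adjugate
  of multiplication by w, so that w * tadj w = tnorm w (Cramer's rule).\<close>

definition mult_mat :: "(nat \<Rightarrow> complex) \<Rightarrow> complex mat" where
  "mult_mat w = mat n n (\<lambda>(k, j). \<Sum>i<n. of_int (struct_const i j k) * w i)"

definition tnorm :: "(nat \<Rightarrow> complex) \<Rightarrow> complex" where
  "tnorm w = det (mult_mat w)"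

definition tadj :: "(nat \<Rightarrow> complex) \<Rightarrow> nat \<Rightarrow> complex" where
  "tadj w = (\<lambda>k. if k < n then adj_mat (mult_mat w) $$ (k, 0) else 0)"

lemma mult_mat_carrier: "mult_mat w \<in> carrier_mat n n"
  unfolding mult_mat_def by simp

lemma tadj_in_tvecs: "tadj w \<in> tvecs"
  unfolding tadj_def tvecs_def by auto

lemma tmult_eq_mult_mat: "k < n \<Longrightarrow> tmult w u k = (\<Sum>j<n. mult_mat w $$ (k, j) * u j)"
  unfolding tmult_def mult_mat_def by (subst sum.swap) (auto simp: sum_distrib_right intro!: sum.cong)

lemma tmult_tadj: "tmult w (tadj w) = (\<lambda>k. tnorm w * tone k)"
proof (rule ext)
  fix k
  show "tmult w (tadj w) k = tnorm w * tone k"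
  proof (cases "k < n")
    case True
    have "tmult w (tadj w) k = (\<Sum>j<n. mult_mat w $$ (k, j) * adj_mat (mult_mat w) $$ (j, 0))"
      using True by (simp add: tmult_eq_mult_mat tadj_def)
    also have "\<dots> = (mult_mat w * adj_mat (mult_mat w)) $$ (k, 0)"
      using True n_pos adj_mat(1)[OF mult_mat_carrier[of w]]
      by (simp add: scalar_prod_def atLeast0LessThan mult_mat_def)
    also have "\<dots> = tnorm w * tone k"
      using adj_mat(2)[OF mult_mat_carrier[of w]] True n_pos by (simp add: tnorm_def tone_def)
    finally show ?thesis .
  next
    case False
    then show ?thesis using tmult_in_tvecs[of w "tadj w"] n_pos by (simp add: tvecs_def tone_def)
  qed
qed

lemma tmult_tadj_cancel:
  assumes "u \<in> tvecs"
  shows "tmult (tmult w u) (tadj w) = (\<lambda>k. tnorm w * u k)"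
proof -
  have "tmult (tmult w u) (tadj w) = tmult u (tmult w (tadj w))"
    by (simp only: tmult_commute[of w u] tmult_assoc)
  also have "\<dots> = (\<lambda>k. tnorm w * tmult u tone k)"
    by (simp only: tmult_tadj tmult_scale)
  also have "\<dots> = (\<lambda>k. tnorm w * u k)"
    using tmult_tone[OF assms] tmult_commute[of u tone] by simp
  finally show ?thesis .
qed

lemma tnorm_tone: "tnorm tone = 1"
proof -
  have "mult_mat tone = 1\<^sub>m n"
    using n_pos by (auto simp: mult_mat_def tone_def struct_const_one if_distrib[of "\<lambda>x. _ * x"]
        sum.delta' cong: if_cong)
  then show ?thesis unfolding tnorm_def by simp
qed

lemma tnorm_nonzero_if_invertible:
  assumes "tmult w' w = tone"
  shows "tnorm w \<noteq> 0"
proof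
  assume "tnorm w = 0"
  then obtain x where x: "x \<in> carrier_vec n" "x \<noteq> 0\<^sub>v n" "mult_mat w *\<^sub>v x = 0\<^sub>v n"
    using det_0_iff_vec_prod_zero[OF mult_mat_carrier[of w]] unfolding tnorm_def by blast
  define u where "u k = (if k < n then vec_index x k else 0)" for k
  have u: "u \<in> tvecs" unfolding u_def tvecs_def by simp
  have "tmult w u = (\<lambda>_. 0)"
  proof (rule ext)
    fix k show "tmult w u k = 0"
    proof (cases "k < n")
      case True
      have "tmult w u k = (mult_mat w *\<^sub>v x) $ k"
        using True x(1) by (simp add: tmult_eq_mult_mat u_def scalar_prod_def atLeast0LessThan mult_mat_def)
      then show ?thesis using x(3) True by simp
    qed (use tmult_in_tvecs[of w u] in \<open>simp add: tvecs_def\<close>)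
  qed
  then have u0: "u = (\<lambda>_. 0)"
    using tmult_tone[OF u] assms tmult_assoc[of w' w u] by (simp add: tmult_def)
  have "vec_index x i = 0" if "i < n" for i using fun_cong[OF u0, of i] that by (simp add: u_def)
  then have "x = 0\<^sub>v n" using x(1) by (intro eq_vecI) auto
  then show False using x(2) by simp
qed

lemma polyvec_tmult: "polyvec N u \<Longrightarrow> polyvec N w \<Longrightarrow> polyvec N (\<lambda>v. tmult (u v) (w v))"
  unfolding polyvec_def tmult_def by (auto intro!: polyfun_sum pf_mult pf_const)

lemma polyfun_tnorm: "polyvec N u \<Longrightarrow> (\<lambda>v. tnorm (u v)) \<in> polyfun N"
  unfolding tnorm_def
  by (rule polyfun_det[OF mult_mat_carrier]) (auto simp: mult_mat_def polyvec_def intro!: polyfun_sum pf_mult pf_const)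

lemma polyvec_tadj: "polyvec N u \<Longrightarrow> polyvec N (\<lambda>v. tadj (u v))"
  unfolding polyvec_def
proof
  fix k assume u: "\<forall>k. (\<lambda>v. u v k) \<in> polyfun N"
  show "(\<lambda>v. tadj (u v) k) \<in> polyfun N"
  proof (cases "k < n")
    case True
    have "tadj (u v) k = (-1) ^ k * det (mat_delete (mult_mat (u v)) 0 k)" for v
      using True n_pos unfolding tadj_def adj_mat_def cofactor_def by (simp add: mult_mat_def)
    moreover have "(\<lambda>v. det (mat_delete (mult_mat (u v)) 0 k)) \<in> polyfun N"
      by (rule polyfun_det[OF mat_delete_carrier[OF mult_mat_carrier]])
         (use u in \<open>auto simp: mat_delete_def mult_mat_def intro!: polyfun_sum pf_mult pf_const\<close>)
    ultimately show ?thesis by (simp add: polyfun_scale)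
  qed (simp add: tadj_def pf_const)
qed

end

section \<open>A Cayley parametrization of the norm-one variety\<close>

lemma (in cring) cayley_norm_one:
  assumes c: "\<alpha> \<in> carrier R" "\<beta> \<in> carrier R" "Y \<in> carrier R" "Z \<in> carrier R" "T \<in> carrier R" "r \<in> carrier R"
    and Q: "Q = \<alpha> \<otimes> (Y \<otimes> Y) \<oplus> \<beta> \<otimes> (Z \<otimes> Z) \<ominus> (\<alpha> \<otimes> \<beta>) \<otimes> (T \<otimes> T)"
    and inv: "(\<one> \<ominus> Q) \<otimes> r = \<one>"
    and x: "x = (\<one> \<oplus> Q) \<otimes> r" and s: "s = (\<one> \<oplus> \<one>) \<otimes> r"
  shows "x \<otimes> x \<ominus> \<alpha> \<otimes> ((s \<otimes> Y) \<otimes> (s \<otimes> Y)) \<ominus> \<beta> \<otimes> ((s \<otimes> Z) \<otimes> (s \<otimes> Z))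
      \<oplus> (\<alpha> \<otimes> \<beta>) \<otimes> ((s \<otimes> T) \<otimes> (s \<otimes> T)) = \<one>"
proof -
  have Qc: "Q \<in> carrier R" and sc: "s \<in> carrier R" using c unfolding Q s by simp_all
  have scaled: "\<alpha> \<otimes> ((s \<otimes> Y) \<otimes> (s \<otimes> Y)) \<oplus> \<beta> \<otimes> ((s \<otimes> Z) \<otimes> (s \<otimes> Z)) \<ominus> (\<alpha> \<otimes> \<beta>) \<otimes> ((s \<otimes> T) \<otimes> (s \<otimes> T))
      = (s \<otimes> s) \<otimes> Q"
    unfolding Q using c sc by (simp add: r_distr r_minus minus_eq m_ac)
  have "x \<otimes> x \<ominus> \<alpha> \<otimes> ((s \<otimes> Y) \<otimes> (s \<otimes> Y)) \<ominus> \<beta> \<otimes> ((s \<otimes> Z) \<otimes> (s \<otimes> Z))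
      \<oplus> (\<alpha> \<otimes> \<beta>) \<otimes> ((s \<otimes> T) \<otimes> (s \<otimes> T))
      = x \<otimes> x \<ominus> (\<alpha> \<otimes> ((s \<otimes> Y) \<otimes> (s \<otimes> Y)) \<oplus> \<beta> \<otimes> ((s \<otimes> Z) \<otimes> (s \<otimes> Z)) \<ominus> (\<alpha> \<otimes> \<beta>) \<otimes> ((s \<otimes> T) \<otimes> (s \<otimes> T)))"
    using c sc Qc unfolding x by (simp add: minus_eq minus_add a_ac minus_minus)
  also have "\<dots> = x \<otimes> x \<ominus> (s \<otimes> s) \<otimes> Q" by (simp only: scaled)
  also have "\<dots> = ((\<one> \<ominus> Q) \<otimes> r) \<otimes> ((\<one> \<ominus> Q) \<otimes> r)"
    unfolding x s using Qc c(6)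
    by (simp add: r_distr l_distr r_minus l_minus minus_eq m_ac a_ac minus_add r_neg1 r_neg2)
  finally show ?thesis using inv by simp
qed

lemma (in cring) cayley_plus_one:
  assumes c: "Q \<in> carrier R" "r \<in> carrier R"
    and inv: "(\<one> \<ominus> Q) \<otimes> r = \<one>"
  shows "(\<one> \<oplus> Q) \<otimes> r \<oplus> \<one> = (\<one> \<oplus> \<one>) \<otimes> r"
    and "(\<one> \<ominus> Q) \<otimes> ((\<one> \<oplus> Q) \<otimes> r \<oplus> \<one>) = \<one> \<oplus> \<one>"
proof -
  have "(\<one> \<oplus> Q) \<otimes> r \<oplus> \<one> = (\<one> \<oplus> Q) \<otimes> r \<oplus> (\<one> \<ominus> Q) \<otimes> r" using inv by simp
  also have "\<dots> = (\<one> \<oplus> \<one>) \<otimes> r" using c by algebra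
  finally show 1: "(\<one> \<oplus> Q) \<otimes> r \<oplus> \<one> = (\<one> \<oplus> \<one>) \<otimes> r" .
  have "(\<one> \<ominus> Q) \<otimes> ((\<one> \<oplus> \<one>) \<otimes> r) = (\<one> \<oplus> \<one>) \<otimes> ((\<one> \<ominus> Q) \<otimes> r)" using c by (simp add: m_ac)
  then show "(\<one> \<ominus> Q) \<otimes> ((\<one> \<oplus> Q) \<otimes> r \<oplus> \<one>) = \<one> \<oplus> \<one>" unfolding 1 inv using c by simp
qed

locale quaternion_order = integral_basis_of_field +
  fixes a b :: real
  assumes a_in_R: "a \<in> ring_of_integers F" and b_in_R: "b \<in> ring_of_integers F"
begin

definition blk :: "nat \<Rightarrow> (nat \<Rightarrow> complex) \<Rightarrow> nat \<Rightarrow> complex" where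
  "blk s v = (\<lambda>i. if i < n then v (s + i) else 0)"

definition join_blocks ::
    "(nat \<Rightarrow> complex) \<Rightarrow> (nat \<Rightarrow> complex) \<Rightarrow> (nat \<Rightarrow> complex) \<Rightarrow> (nat \<Rightarrow> complex) \<Rightarrow> nat \<Rightarrow> complex" where
  "join_blocks x y z t = (\<lambda>i. if i < n then x i else if i < 2 * n then y (i - n)
      else if i < 3 * n then z (i - 2 * n) else if i < 4 * n then t (i - 3 * n) else 0)"

definition quat_norm ::
    "(nat \<Rightarrow> complex) \<Rightarrow> (nat \<Rightarrow> complex) \<Rightarrow> (nat \<Rightarrow> complex) \<Rightarrow> (nat \<Rightarrow> complex) \<Rightarrow> nat \<Rightarrow> complex" where
  "quat_norm x y z t = (\<lambda>k. tmult x x k - tmult (of_R a) (tmult y y) k - tmult (of_R b) (tmult z z) k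
      + tmult (of_R (a * b)) (tmult t t) k)"

lemma blk_in_tvecs: "blk s v \<in> tvecs"
  unfolding blk_def tvecs_def by auto

lemma blk_join_blocks:
  assumes "x \<in> tvecs" "y \<in> tvecs" "z \<in> tvecs" "t \<in> tvecs"
  shows "blk 0 (join_blocks x y z t) = x" "blk n (join_blocks x y z t) = y"
    "blk (2 * n) (join_blocks x y z t) = z" "blk (3 * n) (join_blocks x y z t) = t"
  using assms by (auto simp: blk_def join_blocks_def tvecs_def fun_eq_iff)

lemma blk_divide: "blk s (\<lambda>i. f i / c) = (\<lambda>i. blk s f i / c)"
  unfolding blk_def by auto

lemma polyvec_blk: "s + n \<le> N \<Longrightarrow> polyvec N (blk s)"
  unfolding polyvec_def blk_def
proof
  fix k assume "s + n \<le> N"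
  then show "(\<lambda>v. if k < n then v (s + k) else 0) \<in> polyfun N"
    by (cases "k < n") (auto intro: pf_var pf_const)
qed

lemma polyvec_join_blocks:
  assumes "polyvec N x" "polyvec N y" "polyvec N z" "polyvec N t"
  shows "polyvec N (\<lambda>v. join_blocks (x v) (y v) (z v) (t v))"
  using assms unfolding polyvec_def join_blocks_def by (auto intro!: polyfun_if pf_const)

lemma gpoly_eq_quat_norm:
  "gpoly n \<theta> a b k v = quat_norm (blk 0 v) (blk n v) (blk (2 * n) v) (blk (3 * n) v) k"
proof -
  have block: "tmult (\<lambda>i. v (s + i)) (\<lambda>i. v (s + i)) = tmult (blk s v) (blk s v)" for s
    by (rule tmult_cong) (auto simp: blk_def)
  have block0: "tmult v v = tmult (blk 0 v) (blk 0 v)"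
    by (rule tmult_cong) (auto simp: blk_def)
  show ?thesis
    unfolding block0 gpoly_def quad_coord_eq_tmult of_R_one tmult_tone[OF tmult_in_tvecs] block quat_norm_def
    by simp
qed

lemma in_code_algsetI:
  assumes "\<forall>i\<ge>4 * n. v i = 0" and "quat_norm (blk 0 v) (blk n v) (blk (2 * n) v) (blk (3 * n) v) = tone"
  shows "v \<in> code_algset n \<theta> a b"
  using assms unfolding code_algset_def gpoly_eq_quat_norm by (auto simp: tone_def)

text \<open>For v in C^(3n) with blocks Y, Z, T, qform v is Q = a Y^2 + b Z^2 - ab T^2, and cayley v is
  ((1 + Q) r, 2 r Y, 2 r Z, 2 r T) with r = (1 - Q)^-1 = adj(1 - Q) / N(1 - Q), written over the
  common denominator N(1 - Q).\<close>

definition qform :: "(nat \<Rightarrow> complex) \<Rightarrow> nat \<Rightarrow> complex" where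
  "qform v = (\<lambda>k. tmult (of_R a) (tmult (blk 0 v) (blk 0 v)) k + tmult (of_R b) (tmult (blk n v) (blk n v)) k
      - tmult (of_R (a * b)) (tmult (blk (2 * n) v) (blk (2 * n) v)) k)"

definition cayley_denom :: "(nat \<Rightarrow> complex) \<Rightarrow> complex" where
  "cayley_denom v = tnorm (\<lambda>k. tone k - qform v k)"

definition cayley_num :: "(nat \<Rightarrow> complex) \<Rightarrow> nat \<Rightarrow> complex" where
  "cayley_num v = join_blocks
     (tmult (\<lambda>k. tone k + qform v k) (tadj (\<lambda>k. tone k - qform v k)))
     (tmult (tmult (\<lambda>k. tone k + tone k) (tadj (\<lambda>k. tone k - qform v k))) (blk 0 v))
     (tmult (tmult (\<lambda>k. tone k + tone k) (tadj (\<lambda>k. tone k - qform v k))) (blk n v))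
     (tmult (tmult (\<lambda>k. tone k + tone k) (tadj (\<lambda>k. tone k - qform v k))) (blk (2 * n) v))"

definition cayley :: "(nat \<Rightarrow> complex) \<Rightarrow> nat \<Rightarrow> complex" where
  "cayley v = (\<lambda>i. cayley_num v i / cayley_denom v)"

definition cayley_r :: "(nat \<Rightarrow> complex) \<Rightarrow> nat \<Rightarrow> complex" where
  "cayley_r v = (\<lambda>k. tadj (\<lambda>k. tone k - qform v k) k / cayley_denom v)"

lemma polyvec_qform: "polyvec (3 * n) qform"
  unfolding qform_def by (intro polyvec_diff polyvec_add polyvec_tmult polyvec_const polyvec_blk) auto

lemma polyfun_cayley_denom: "cayley_denom \<in> polyfun (3 * n)"
  using polyfun_tnorm[OF polyvec_diff[OF polyvec_const polyvec_qform]] unfolding cayley_denom_def[abs_def] .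

lemma polyvec_cayley_num: "polyvec (3 * n) cayley_num"
  unfolding cayley_num_def[abs_def]
  by (intro polyvec_join_blocks polyvec_tmult polyvec_add polyvec_diff polyvec_tadj polyvec_const
      polyvec_qform polyvec_blk) auto

lemma cayley_denom_zero: "cayley_denom (\<lambda>_. 0) = 1"
proof -
  have "blk s (\<lambda>_. 0) = (\<lambda>_. 0)" for s unfolding blk_def by auto
  then have "qform (\<lambda>_. 0) = (\<lambda>_. 0)" unfolding qform_def by (simp add: tmult_def)
  then show ?thesis unfolding cayley_denom_def by (simp add: tnorm_tone)
qed

lemma cayley_r_inverse: "cayley_denom v \<noteq> 0 \<Longrightarrow> tmult (\<lambda>k. tone k - qform v k) (cayley_r v) = tone"
  unfolding cayley_r_def tmult_divide tmult_tadj cayley_denom_def by auto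

lemma cayley_blocks:
  "blk 0 (cayley v) = tmult (\<lambda>k. tone k + qform v k) (cayley_r v)"
  "blk n (cayley v) = tmult (tmult (\<lambda>k. tone k + tone k) (cayley_r v)) (blk 0 v)"
  "blk (2 * n) (cayley v) = tmult (tmult (\<lambda>k. tone k + tone k) (cayley_r v)) (blk n v)"
  "blk (3 * n) (cayley v) = tmult (tmult (\<lambda>k. tone k + tone k) (cayley_r v)) (blk (2 * n) v)"
  unfolding cayley_def blk_divide cayley_num_def cayley_r_def
  by (simp_all add: blk_join_blocks tmult_in_tvecs tmult_divide tmult_divide_left)

lemma tvecs_add: "x \<in> tvecs \<Longrightarrow> y \<in> tvecs \<Longrightarrow> (\<lambda>k. x k + y k) \<in> tvecs"
  and tvecs_diff: "x \<in> tvecs \<Longrightarrow> y \<in> tvecs \<Longrightarrow> (\<lambda>k. x k - y k) \<in> tvecs"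
  and tvecs_divide: "x \<in> tvecs \<Longrightarrow> (\<lambda>k. x k / c) \<in> tvecs"
  unfolding tvecs_def by auto

lemma qform_in_tvecs: "qform v \<in> tvecs"
  unfolding qform_def by (intro tvecs_add tvecs_diff tmult_in_tvecs)

lemma cayley_r_in_tvecs: "cayley_r v \<in> tvecs"
  unfolding cayley_r_def by (intro tvecs_divide tadj_in_tvecs)

abbreviation "RC \<equiv> tensor_ring"

lemma qform_ring:
  "qform v = of_R a \<otimes>\<^bsub>RC\<^esub> (blk 0 v \<otimes>\<^bsub>RC\<^esub> blk 0 v) \<oplus>\<^bsub>RC\<^esub> of_R b \<otimes>\<^bsub>RC\<^esub> (blk n v \<otimes>\<^bsub>RC\<^esub> blk n v)
     \<ominus>\<^bsub>RC\<^esub> (of_R a \<otimes>\<^bsub>RC\<^esub> of_R b) \<otimes>\<^bsub>RC\<^esub> (blk (2 * n) v \<otimes>\<^bsub>RC\<^esub> blk (2 * n) v)"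
  unfolding qform_def tensor_ring_simps of_R_mult[OF a_in_R b_in_R]
  by (subst tensor_ring_minus) (auto intro: tvecs_add tmult_in_tvecs)

lemma quat_norm_ring:
  "quat_norm x y z t = x \<otimes>\<^bsub>RC\<^esub> x \<ominus>\<^bsub>RC\<^esub> of_R a \<otimes>\<^bsub>RC\<^esub> (y \<otimes>\<^bsub>RC\<^esub> y) \<ominus>\<^bsub>RC\<^esub> of_R b \<otimes>\<^bsub>RC\<^esub> (z \<otimes>\<^bsub>RC\<^esub> z)
     \<oplus>\<^bsub>RC\<^esub> (of_R a \<otimes>\<^bsub>RC\<^esub> of_R b) \<otimes>\<^bsub>RC\<^esub> (t \<otimes>\<^bsub>RC\<^esub> t)"
  unfolding quat_norm_def tensor_ring_simps of_R_mult[OF a_in_R b_in_R]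
  by (simp add: tensor_ring_minus tvecs_diff tmult_in_tvecs)

lemma one_minus_qform_ring: "(\<lambda>k. tone k - qform v k) = \<one>\<^bsub>RC\<^esub> \<ominus>\<^bsub>RC\<^esub> qform v"
  by (simp add: tensor_ring_simps tensor_ring_minus tone_in_tvecs qform_in_tvecs)

lemma cayley_in_code_algset:
  assumes "cayley_denom v \<noteq> 0"
  shows "cayley v \<in> code_algset n \<theta> a b"
proof (rule in_code_algsetI)
  interpret cring RC by (rule cring_tensor_ring)
  show "\<forall>i\<ge>4 * n. cayley v i = 0" unfolding cayley_def cayley_num_def join_blocks_def by simp
  have c: "of_R a \<in> carrier RC" "of_R b \<in> carrier RC" "blk s v \<in> carrier RC" "cayley_r v \<in> carrier RC" for s
    by (simp_all add: tensor_ring_simps of_R_in_tvecs a_in_R b_in_R blk_in_tvecs cayley_r_in_tvecs)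
  have inv: "(\<one>\<^bsub>RC\<^esub> \<ominus>\<^bsub>RC\<^esub> qform v) \<otimes>\<^bsub>RC\<^esub> cayley_r v = \<one>\<^bsub>RC\<^esub>"
    using cayley_r_inverse[OF assms] by (simp add: one_minus_qform_ring tensor_ring_simps)
  show "quat_norm (blk 0 (cayley v)) (blk n (cayley v)) (blk (2 * n) (cayley v)) (blk (3 * n) (cayley v)) = tone"
    using cayley_norm_one[OF c(1,2) c(3)[of 0] c(3)[of n] c(3)[of "2 * n"] c(4) qform_ring inv refl refl]
    unfolding cayley_blocks quat_norm_ring by (simp add: tensor_ring_simps)
qed

text \<open>Y is recovered from a point (x, y, z, t) of the image as y (x + 1)^-1; multiplying by the
  norm of x + 1 instead of dividing gives a polynomial function.\<close>

definition recover_coord :: "nat \<Rightarrow> (nat \<Rightarrow> complex) \<Rightarrow> complex" where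
  "recover_coord p w = tmult (blk (n + n * (p div n)) w) (tadj (\<lambda>k. blk 0 w k + tone k)) (p mod n)"

lemma polyfun_recover_coord:
  assumes "p < 3 * n"
  shows "recover_coord p \<in> polyfun (4 * n)"
proof -
  have "p div n < 3" using assms n_pos by (simp add: less_mult_imp_div_less)
  then have "n + n * (p div n) + n \<le> 4 * n" by (auto simp: algebra_simps)
  then have "polyvec (4 * n) (\<lambda>w. tmult (blk (n + n * (p div n)) w) (tadj (\<lambda>k. blk 0 w k + tone k)))"
    by (intro polyvec_tmult polyvec_blk polyvec_tadj polyvec_add polyvec_const) simp_all
  then show ?thesis unfolding recover_coord_def[abs_def] by (rule polyvecD)
qed

lemma cayley_x_plus_one:
  assumes D: "cayley_denom v \<noteq> 0"
  shows "(\<lambda>k. blk 0 (cayley v) k + tone k) = tmult (\<lambda>k. tone k + tone k) (cayley_r v)"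
    and "tnorm (\<lambda>k. blk 0 (cayley v) k + tone k) \<noteq> 0"
proof -
  interpret cring RC by (rule cring_tensor_ring)
  have c: "qform v \<in> carrier RC" "cayley_r v \<in> carrier RC"
    by (simp_all add: tensor_ring_simps qform_in_tvecs cayley_r_in_tvecs)
  have inv: "(\<one>\<^bsub>RC\<^esub> \<ominus>\<^bsub>RC\<^esub> qform v) \<otimes>\<^bsub>RC\<^esub> cayley_r v = \<one>\<^bsub>RC\<^esub>"
    using cayley_r_inverse[OF D] by (simp add: one_minus_qform_ring tensor_ring_simps)
  show "(\<lambda>k. blk 0 (cayley v) k + tone k) = tmult (\<lambda>k. tone k + tone k) (cayley_r v)"
    using cayley_plus_one(1)[OF c inv] unfolding cayley_blocks by (simp add: tensor_ring_simps)
  have "tmult (\<lambda>k. tone k - qform v k) (\<lambda>k. blk 0 (cayley v) k + tone k) = (\<lambda>k. tone k + tone k)"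
    using cayley_plus_one(2)[OF c inv] unfolding cayley_blocks one_minus_qform_ring
    by (simp add: tensor_ring_simps)
  then have "tmult (\<lambda>k. (tone k - qform v k) / 2) (\<lambda>k. blk 0 (cayley v) k + tone k) = tone"
    by (simp add: tmult_divide_left)
  then show "tnorm (\<lambda>k. blk 0 (cayley v) k + tone k) \<noteq> 0" by (rule tnorm_nonzero_if_invertible)
qed

lemma recover_coord_cayley:
  assumes p: "p < 3 * n" and D: "cayley_denom v \<noteq> 0"
  shows "\<exists>d. d \<noteq> 0 \<and> recover_coord p (cayley v) = d * v p"
proof -
  define s where "s = n * (p div n)"
  define x1 where "x1 = (\<lambda>k. blk 0 (cayley v) k + tone k)"
  have "p div n < 3" using p n_pos by (simp add: less_mult_imp_div_less)
  then have "s = 0 \<or> s = n \<or> s = 2 * n" unfolding s_def by (auto simp: less_Suc_eq numeral_3_eq_3)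
  moreover have "n + 0 = n" "n + n = 2 * n" "n + 2 * n = 3 * n" by simp_all
  ultimately have "blk (n + s) (cayley v) = tmult (tmult (\<lambda>k. tone k + tone k) (cayley_r v)) (blk s v)"
    by (metis cayley_blocks(2-4))
  then have y: "blk (n + s) (cayley v) = tmult x1 (blk s v)"
    unfolding x1_def cayley_x_plus_one(1)[OF D] .
  have "recover_coord p (cayley v) = tmult (tmult x1 (blk s v)) (tadj x1) (p mod n)"
    unfolding recover_coord_def s_def[symmetric] y x1_def ..
  also have "\<dots> = tnorm x1 * blk s v (p mod n)"
    by (simp only: tmult_tadj_cancel[OF blk_in_tvecs])
  also have "blk s v (p mod n) = v p"
    unfolding blk_def s_def using n_pos by simp
  finally show ?thesis using cayley_x_plus_one(2)[OF D] unfolding x1_def by blast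
qed

theorem code_algset_dim_ge: "enat (3 * n) \<le> alg_set_dim (4 * n) (code_algset n \<theta> a b)"
proof (rule alg_set_dim_ge_rational_param[where D = cayley_denom and \<phi> = cayley])
  show "\<exists>h\<in>polyfun (3 * n). \<forall>v. cayley_denom v \<noteq> 0 \<longrightarrow> cayley v i = h v / cayley_denom v" for i
    using polyvecD[OF polyvec_cayley_num] unfolding cayley_def by fast
  show "\<exists>G\<in>polyfun (4 * n). \<forall>v. cayley_denom v \<noteq> 0 \<longrightarrow> (G (cayley v) = 0 \<longleftrightarrow> v p = 0)" if "p < 3 * n" for p
    using polyfun_recover_coord[OF that] recover_coord_cayley[OF that] by (metis mult_eq_0_iff)
qed (simp_all add: polyfun_cayley_denom cayley_denom_zero cayley_in_code_algset)

end

theorem mainTheorem2: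
  fixes F :: "real set" and n :: nat and a b :: real and \<theta> :: "nat \<Rightarrow> real"
  assumes "number_field_deg F n"
    and "totally_real F"
    and "a \<in> ring_of_integers F" and "a \<noteq> 0"
    and "b \<in> ring_of_integers F" and "b \<noteq> 0"
    and "quat_division_algebra F a b"
    and "card {\<sigma>. field_emb F \<sigma> \<and> real_quat_iso_M2 (Re (\<sigma> a)) (Re (\<sigma> b))} = 1"
    and "card {\<sigma>. field_emb F \<sigma> \<and> real_quat_iso_hamilton (Re (\<sigma> a)) (Re (\<sigma> b))} = n - 1"
    and "integral_basis F n \<theta>" and "\<theta> 0 = 1"
  shows "alg_set_dim (4 * n) (code_algset n \<theta> a b) \<ge> enat (3 * n)"
proof -
  interpret quaternion_order F n \<theta> a b
    by unfold_locales (use assms in \<open>auto simp: number_field_deg_def\<close>)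
  show ?thesis by (rule code_algset_dim_ge)
qed

end
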